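(* For all monitors $m,n$: $m\simeq_\omega n$ if and only if, for every closed substitution $\sigma$, the set $$\mathcal{S}_{m,n,\sigma}=\big(L_a(\sigma(m))\setminus L_a(\sigma(n))\big)\cup\big(L_r(\sigma(m))\setminus L_r(\sigma(n))\big)\cup\big(L_a(\sigma(n))\setminus L_a(\sigma(m))\big)\cup\big(L_r(\sigma(n))\setminus L_r(\sigma(m))\big)$$ is finite.
   Context: Monitors: terms $m,n ::= v \mid a.m \mid m+n \mid x$ over a nonempty action set $\mathit{Act}$ and variables $x$, verdicts $v::=\mathit{end}\mid\mathit{yes}\mid\mathit{no}$; a closed substitution maps each variable to a variable-free monitor. Semantics: $\xrightarrow{\alpha}$ ($\alpha\in\mathit{Act}\cup\{\tau\}$) is the least relation with $a.m\xrightarrow{a}m$; $m\xrightarrow{\alpha}m'$ implies $m+n\xrightarrow{\alpha}m'$ and $n+m\xrightarrow{\alpha}m'$; $v\xrightarrow{\alpha}v$ for verdicts $v$. Weak transitions: $m\xRightarrow{\varepsilon}m'$ iff $m(\xrightarrow{\tau})^*m'$; $m\xRightarrow{a}m'$ iff $m\xRightarrow{\varepsilon}\xrightarrow{a}\xRightarrow{\varepsilon}m'$; $m\xRightarrow{as'}m'$ ($s'\ne\varepsilon$) iff $m\xRightarrow{a}m_1\xRightarrow{s'}m'$. For closed $m$, $L_a(m)=\{s\in\mathit{Act}^*\mid m\xRightarrow{s}\mathit{yes}\}$, $L_r(m)=\{s\in\mathit{Act}^*\mid m\xRightarrow{s}\mathit{no}\}$; closed $m\simeq_\omega n$ iff $L_a(m)\cdot\mathit{Act}^\omega=L_a(n)\cdot\mathit{Act}^\omega$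 and $L_r(m)\cdot\mathit{Act}^\omega=L_r(n)\cdot\mathit{Act}^\omega$ ($\mathit{Act}^\omega$: infinite sequences over $\mathit{Act}$); for open terms $m\simeq_\omega n$ iff $\sigma(m)\simeq_\omega\sigma(n)$ for every closed substitution $\sigma$. *)

theory Defs
  imports Main
begin

datatype verdict = VEnd | VYes | VNo

datatype ('a, 'v) mon =
    Verdict verdict
  | Prefix 'a "('a, 'v) mon"
  | Choice "('a, 'v) mon" "('a, 'v) mon"
  | Var 'v

fun vars :: "('a, 'v) mon \<Rightarrow> 'v set" where
  "vars (Verdict v) = {}"
| "vars (Prefix a m) = vars m"
| "vars (Choice m n) = vars m \<union> vars n"
| "vars (Var x) = {x}"

definition closed :: "('a, 'v) mon \<Rightarrow> bool" where
  "closed m \<longleftrightarrow> vars m = {}"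

definition closed_subst :: "('v \<Rightarrow> ('a, 'v) mon) \<Rightarrow> bool" where
  "closed_subst \<sigma> \<longleftrightarrow> (\<forall>x. closed (\<sigma> x))"

fun subst :: "('v \<Rightarrow> ('a, 'v) mon) \<Rightarrow> ('a, 'v) mon \<Rightarrow> ('a, 'v) mon" where
  "subst \<sigma> (Verdict v) = Verdict v"
| "subst \<sigma> (Prefix a m) = Prefix a (subst \<sigma> m)"
| "subst \<sigma> (Choice m n) = Choice (subst \<sigma> m) (subst \<sigma> n)"
| "subst \<sigma> (Var x) = \<sigma> x"

text \<open>Labels: Some a is the action a, None is the silent action tau.\<close>
inductive step :: "('a, 'v) mon \<Rightarrow> 'a option \<Rightarrow> ('a, 'v) mon \<Rightarrow> bool" where
  act:     "step (Prefix a m) (Some a) m"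
| choiceL: "step m \<alpha> m' \<Longrightarrow> step (Choice m n) \<alpha> m'"
| choiceR: "step m \<alpha> m' \<Longrightarrow> step (Choice n m) \<alpha> m'"
| verd:    "step (Verdict v) \<alpha> (Verdict v)"

definition tau_star :: "('a, 'v) mon \<Rightarrow> ('a, 'v) mon \<Rightarrow> bool" where
  "tau_star = (\<lambda>m m'. step m None m')\<^sup>*\<^sup>*"

fun weak :: "('a, 'v) mon \<Rightarrow> 'a list \<Rightarrow> ('a, 'v) mon \<Rightarrow> bool" where
  "weak m [] m' = tau_star m m'"
| "weak m [a] m' = (\<exists>m1 m2. tau_star m m1 \<and> step m1 (Some a) m2 \<and> tau_star m2 m')"
| "weak m (a # b # s) m' = (\<exists>m1. weak m [a] m1 \<and> weak m1 (b # s) m')"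

definition La :: "('a, 'v) mon \<Rightarrow> 'a list set" where
  "La m = {s. weak m s (Verdict VYes)}"

definition Lr :: "('a, 'v) mon \<Rightarrow> 'a list set" where
  "Lr m = {s. weak m s (Verdict VNo)}"

text \<open>Infinite sequences over 'a are functions nat \<Rightarrow> 'a; L \<cdot> Act^\<omega>.\<close>
definition conc_inf :: "'a list \<Rightarrow> (nat \<Rightarrow> 'a) \<Rightarrow> (nat \<Rightarrow> 'a)" where
  "conc_inf s u = (\<lambda>i. if i < length s then s ! i else u (i - length s))"

definition omega_ext :: "'a list set \<Rightarrow> (nat \<Rightarrow> 'a) set" where
  "omega_ext L = {conc_inf s u | s u. s \<in> L}"

definition omega_eq_closed :: "('a, 'v) mon \<Rightarrow> ('a, 'v) mon \<Rightarrow> bool" where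
  "omega_eq_closed m n \<longleftrightarrow>
     omega_ext (La m) = omega_ext (La n) \<and> omega_ext (Lr m) = omega_ext (Lr n)"

definition omega_eq :: "('a, 'v) mon \<Rightarrow> ('a, 'v) mon \<Rightarrow> bool" where
  "omega_eq m n \<longleftrightarrow>
     (\<forall>\<sigma>. closed_subst \<sigma> \<longrightarrow> omega_eq_closed (subst \<sigma> m) (subst \<sigma> n))"

definition Sdiff :: "('a, 'v) mon \<Rightarrow> ('a, 'v) mon \<Rightarrow> ('v \<Rightarrow> ('a, 'v) mon) \<Rightarrow> 'a list set" where
  "Sdiff m n \<sigma> =
     (La (subst \<sigma> m) - La (subst \<sigma> n)) \<union> (Lr (subst \<sigma> m) - Lr (subst \<sigma> n)) \<union>
     (La (subst \<sigma> n) - La (subst \<sigma> m)) \<union> (Lr (subst \<sigma> n) - Lr (subst \<sigma> m))"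

end

theory Submission
  imports Defs "HOL-Library.Sublist"
begin

text \<open>Verdicts are absorbing, so the languages \<open>L\<^sub>a\<close> and \<open>L\<^sub>r\<close> of a monitor are closed under
  extension; since every action step strictly shrinks the monitor, each of them is generated by
  its finitely many words over the actions of the monitor of length at most its size. For an
  extension-closed language \<open>L\<close> and a finitely generated extension-closed \<open>L'\<close>,
  \<open>L \<cdot> Act\<^sup>\<omega> \<subseteq> L' \<cdot> Act\<^sup>\<omega>\<close> holds exactly when \<open>L - L'\<close> is finite: a word of \<open>L - L'\<close> must be a
  proper prefix of a generator of \<open>L'\<close>, and conversely an infinite extension of a word of \<open>L\<close>
  has arbitrarily long finite prefixes in \<open>L\<close>, one of which must lie in \<open>L'\<close>.\<close>

definition extension_closed :: "'a list set \<Rightarrow> bool" where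
  "extension_closed L \<longleftrightarrow> (\<forall>s\<in>L. \<forall>t. s @ t \<in> L)"

definition finitely_based :: "'a list set \<Rightarrow> bool" where
  "finitely_based L \<longleftrightarrow> (\<exists>B. finite B \<and> B \<subseteq> L \<and> (\<forall>t\<in>L. \<exists>g\<in>B. prefix g t))"

lemma conc_inf_append: "conc_inf (s @ t) u = conc_inf s (conc_inf t u)"
  unfolding conc_inf_def by (auto simp: nth_append fun_eq_iff)

lemma conc_inf_map_upt: "conc_inf (map u [0..<k]) (\<lambda>i. u (k + i)) = u"
  unfolding conc_inf_def by auto

lemma conc_inf_eq_imp_prefix:
  assumes "conc_inf s u = conc_inf t u'" and "length s \<le> length t"
  shows "prefix s t"
proof -
  have "take (length s) t = s"
  proof (rule nth_equalityI)
    fix i assume "i < length (take (length s) t)"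
    with assms(2) have "i < length s" by simp
    moreover have "conc_inf s u i = conc_inf t u' i" using assms(1) by simp
    ultimately show "take (length s) t ! i = s ! i"
      using assms(2) unfolding conc_inf_def by simp
  qed (use assms(2) in simp)
  then show ?thesis by (metis take_is_prefix)
qed

lemma omega_ext_subset_if_finite_diff:
  assumes "extension_closed L" and "finite (L - L')"
  shows "omega_ext L \<subseteq> omega_ext L'"
proof
  fix w assume "w \<in> omega_ext L"
  then obtain s u where w: "w = conc_inf s u" and "s \<in> L" unfolding omega_ext_def by blast
  obtain k where long: "\<forall>x\<in>L - L'. length x < k" using finite_maxlen[OF assms(2)] by blast
  have "s @ map u [0..<k] \<in> L" using \<open>s \<in> L\<close> assms(1) unfolding extension_closed_def by blast
  moreover have "\<not> length (s @ map u [0..<k]) < k" by simp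
  ultimately have "s @ map u [0..<k] \<in> L'" using long by blast
  moreover have "w = conc_inf (s @ map u [0..<k]) (\<lambda>i. u (k + i))"
    by (simp add: w conc_inf_append conc_inf_map_upt)
  ultimately show "w \<in> omega_ext L'" unfolding omega_ext_def by blast
qed

lemma finite_diff_if_omega_ext_subset:
  assumes "extension_closed L'" and "finitely_based L'" and "omega_ext L \<subseteq> omega_ext L'"
  shows "finite (L - L')"
proof -
  obtain B where "finite B" "B \<subseteq> L'" and based: "\<forall>t\<in>L'. \<exists>g\<in>B. prefix g t"
    using assms(2) unfolding finitely_based_def by blast
  have "L - L' \<subseteq> (\<Union>g\<in>B. set (prefixes g))"
  proof
    fix s assume s: "s \<in> L - L'"
    have "conc_inf s undefined \<in> omega_ext L'"
      using s assms(3) unfolding omega_ext_def by blast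
    then obtain t u' where "t \<in> L'" and tu: "conc_inf s undefined = conc_inf t u'"
      unfolding omega_ext_def by blast
    then obtain g h where "g \<in> B" and t: "t = g @ h" using based by (auto simp: prefix_def)
    have su: "conc_inf s undefined = conc_inf g (conc_inf h u')" by (simp add: tu t conc_inf_append)
    have "\<not> prefix g s"
      using s \<open>g \<in> B\<close> \<open>B \<subseteq> L'\<close> assms(1) unfolding extension_closed_def prefix_def by blast
    then have "length s \<le> length g"
      using conc_inf_eq_imp_prefix[OF su[symmetric]] by fastforce
    then show "s \<in> (\<Union>g\<in>B. set (prefixes g))"
      using \<open>g \<in> B\<close> conc_inf_eq_imp_prefix[OF su] by auto
  qed
  then show ?thesis using \<open>finite B\<close> finite_subset by blast
qed

lemma omega_ext_subset_iff_finite_diff: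
  assumes "extension_closed L" and "extension_closed L'" and "finitely_based L'"
  shows "omega_ext L \<subseteq> omega_ext L' \<longleftrightarrow> finite (L - L')"
  using assms omega_ext_subset_if_finite_diff finite_diff_if_omega_ext_subset by blast

lemma step_None_imp_Verdict: "step M None M' \<Longrightarrow> \<exists>v. M' = Verdict v"
  by (induction M "None :: 'a option" M' rule: step.induct) auto

lemma step_Verdict: "step (Verdict v) \<alpha> M' \<Longrightarrow> M' = Verdict v"
  by (auto elim: step.cases)

lemma step_cases_size:
  "step M \<alpha> M' \<Longrightarrow> (\<exists>v. M' = Verdict v \<and> step M None M') \<or>
     (\<exists>a. \<alpha> = Some a \<and> a \<in> set1_mon M \<and> set1_mon M' \<subseteq> set1_mon M \<and> size M' < size M)"
  by (induction rule: step.induct) (auto intro: step.intros)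

lemma tau_star_cases: "tau_star M M' \<Longrightarrow> M' = M \<or> (step M None M' \<and> (\<exists>v. M' = Verdict v))"
  unfolding tau_star_def
  by (induction rule: rtranclp_induct) (use step_None_imp_Verdict step_Verdict in metis)+

lemma tau_star_refl: "tau_star M M"
  unfolding tau_star_def by simp

lemma tau_star_trans: "tau_star M M1 \<Longrightarrow> tau_star M1 M2 \<Longrightarrow> tau_star M M2"
  unfolding tau_star_def by (rule rtranclp_trans)

lemma tau_star_step: "step M None M' \<Longrightarrow> tau_star M M'"
  unfolding tau_star_def by (rule r_into_rtranclp)

lemma tau_star_Verdict_iff: "tau_star (Verdict v) M' \<longleftrightarrow> M' = Verdict v"
  using tau_star_cases step_Verdict tau_star_refl by metis

lemma weak_Cons: "weak M (a # s) M' \<longleftrightarrow> (\<exists>M1. weak M [a] M1 \<and> weak M1 s M')"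
  by (cases s) (auto intro: tau_star_refl tau_star_trans)

lemma weak_tau_star_prepend:
  assumes "tau_star M M0" and "weak M0 s M'"
  shows "weak M s M'"
proof (cases s)
  case Nil
  then show ?thesis using assms tau_star_trans by simp
next
  case (Cons a t)
  have "weak M [a] M1" if "weak M0 [a] M1" for M1
    using that assms(1) tau_star_trans by auto
  then show ?thesis using assms(2) Cons weak_Cons by metis
qed

lemma weak_append: "weak M s M1 \<Longrightarrow> weak M1 t M2 \<Longrightarrow> weak M (s @ t) M2"
  by (induction s arbitrary: M) (auto intro: weak_tau_star_prepend, metis weak_Cons)

lemma weak_Verdict_iff: "weak (Verdict v) s M' \<longleftrightarrow> M' = Verdict v"
proof (induction s arbitrary: M')
  case (Cons a s)
  have "weak (Verdict v) [a] M1 \<longleftrightarrow> M1 = Verdict v" for M1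
    by (auto simp: tau_star_Verdict_iff dest: step_Verdict intro: step.verd)
  then show ?case using Cons.IH weak_Cons by metis
qed (simp add: tau_star_Verdict_iff)

lemma weak_Cons_Verdict_cases:
  assumes "weak M (a # t) (Verdict v)"
  obtains "step M None (Verdict v)"
  | M' where "step M (Some a) M'" "weak M' t (Verdict v)"
      "a \<in> set1_mon M" "set1_mon M' \<subseteq> set1_mon M" "size M' < size M"
proof -
  obtain M1 where "weak M [a] M1" and M1: "weak M1 t (Verdict v)"
    using assms weak_Cons by metis
  then obtain Ma Mb where "tau_star M Ma" "step Ma (Some a) Mb" "tau_star Mb M1"
    by auto
  then consider "Ma = M" "step M (Some a) Mb" | v' where "step M None Ma" "Ma = Verdict v'"
    using tau_star_cases by blast
  then show ?thesis
  proof cases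
    case 1
    from step_cases_size[OF 1(2)] show ?thesis
    proof (elim disjE exE conjE)
      fix v' assume "Mb = Verdict v'" "step M None Mb"
      with \<open>tau_star Mb M1\<close> M1 show ?thesis
        by (simp add: tau_star_Verdict_iff weak_Verdict_iff that(1))
    next
      fix b assume "Some a = Some b" "b \<in> set1_mon M" "set1_mon Mb \<subseteq> set1_mon M" "size Mb < size M"
      moreover have "weak Mb t (Verdict v)" using \<open>tau_star Mb M1\<close> M1 by (rule weak_tau_star_prepend)
      ultimately show ?thesis using 1(2) that(2) by simp
    qed
  next
    case 2
    with \<open>step Ma (Some a) Mb\<close> have "Mb = Verdict v'" by (simp add: step_Verdict)
    with \<open>tau_star Mb M1\<close> M1 have "v' = v" by (simp add: tau_star_Verdict_iff weak_Verdict_iff)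
    with 2 show ?thesis by (simp add: that(1))
  qed
qed

lemma weak_Verdict_short_prefix:
  "weak M t (Verdict v) \<Longrightarrow>
     \<exists>g. prefix g t \<and> length g \<le> size M \<and> set g \<subseteq> set1_mon M \<and> weak M g (Verdict v)"
proof (induction t arbitrary: M)
  case Nil
  then show ?case by (intro exI[of _ "[]"]) simp
next
  case (Cons a t)
  from Cons.prems show ?case
  proof (cases rule: weak_Cons_Verdict_cases)
    case 1
    then have "weak M [] (Verdict v)" by (simp add: tau_star_step)
    then show ?thesis by (intro exI[of _ "[]"]) simp
  next
    case (2 M')
    with Cons.IH obtain g where "prefix g t" "length g \<le> size M'" "set g \<subseteq> set1_mon M'"
      "weak M' g (Verdict v)" by blast
    moreover have "weak M [a] M'" using 2(1) by (auto intro: tau_star_refl)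
    ultimately show ?thesis
      using 2 weak_Cons[of M a g] by (intro exI[of _ "a # g"]) auto
  qed
qed

definition verdict_lang :: "verdict \<Rightarrow> ('a, 'v) mon \<Rightarrow> 'a list set" where
  "verdict_lang v M = {s. weak M s (Verdict v)}"

lemma extension_closed_verdict_lang: "extension_closed (verdict_lang v M)"
  unfolding extension_closed_def verdict_lang_def
  using weak_append weak_Verdict_iff by blast

lemma finitely_based_verdict_lang: "finitely_based (verdict_lang v M)"
  unfolding finitely_based_def
proof (intro exI conjI)
  let ?B = "{g \<in> verdict_lang v M. set g \<subseteq> set1_mon M \<and> length g \<le> size M}"
  have "finite (set1_mon M)" by (induction M) auto
  then show "finite ?B"
    by (rule finite_subset[OF _ finite_lists_length_le, rotated]) blast
  show "\<forall>t\<in>verdict_lang v M. \<exists>g\<in>?B. prefix g t"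
  proof
    fix t assume "t \<in> verdict_lang v M"
    then obtain g where "prefix g t" "length g \<le> size M" "set g \<subseteq> set1_mon M"
      "weak M g (Verdict v)"
      using weak_Verdict_short_prefix unfolding verdict_lang_def by blast
    then show "\<exists>g\<in>?B. prefix g t" unfolding verdict_lang_def by blast
  qed
qed blast

lemma omega_ext_verdict_lang_subset_iff:
  "omega_ext (verdict_lang v M) \<subseteq> omega_ext (verdict_lang v N) \<longleftrightarrow>
     finite (verdict_lang v M - verdict_lang v N)"
  by (simp add: omega_ext_subset_iff_finite_diff extension_closed_verdict_lang
      finitely_based_verdict_lang)

lemma omega_eq_closed_iff_finite:
  "omega_eq_closed M N \<longleftrightarrow> finite ((La M - La N) \<union> (Lr M - Lr N) \<union> (La N - La M) \<union> (Lr N - Lr M))"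
proof -
  have lang: "La = verdict_lang VYes" "Lr = verdict_lang VNo"
    unfolding La_def Lr_def verdict_lang_def by auto
  show ?thesis
    unfolding omega_eq_closed_def lang set_eq_subset omega_ext_verdict_lang_subset_iff by auto
qed

theorem mainTheorem18:
  fixes m n :: "('a, 'v) mon"
  shows "omega_eq m n \<longleftrightarrow> (\<forall>\<sigma>. closed_subst \<sigma> \<longrightarrow> finite (Sdiff m n \<sigma>))"
  unfolding omega_eq_def Sdiff_def omega_eq_closed_iff_finite ..

end
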